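(* Let $\mathbf{t}_{3/2}=(t_i)_{i\ge 0}$ be the Thue--Morse word in base $3/2$. For integers $n\ge 0$, $N\ge 0$, a letter $c\in\{0,1\}$ and $k\in\mathbb{Z}$, let \[ C_n(c,k,N)=\#\{0\le i<N : t_i=c,\ i\equiv k \pmod{2^n}\}. \] Then for all $n\ge 0$, $c\in\{0,1\}$ and $k\in\mathbb{Z}$, \[ \lim_{N\to\infty}\frac{C_n(c,k,N)}{N}=\frac{1}{2^{n+1}}. \] In particular, the frequency of $0$ (and of $1$) in $\mathbf{t}_{3/2}$, i.e. $\lim_{N\to\infty}\#\{0\le i<N: t_i=c\}/N$, exists and equals $1/2$.
   Context: Base-$3/2$ expansions: $\langle 0\rangle_{3/2}$ is the empty word, and for $n\ge 1$, writing $2n=3m+d$ with integers $m\ge 0$ and $d\in\{0,1,2\}$, one sets $\langle n\rangle_{3/2}=\langle m\rangle_{3/2}\,d$ (so that $n=\sum_i d_i\frac12(\frac32)^i$ with digits $d_i\in\{0,1,2\}$). The Thue--Morse word in base $3/2$ is $\mathbf{t}_{3/2}=(t_n)_{n\ge0}\in\{0,1\}^{\mathbb{N}}$ where $t_n$ is the sum of the digits of $\langle n\rangle_{3/2}$ reduced modulo $2$. Equivalently, it is the unique binary sequence with $t_0=0$ and $t_{3n}=t_{3n+1}=t_{2n}$, $t_{3n+2}=1-t_{2n+1}$ for all $n\ge0$; it begins $001110111110110111110000110110\cdots$. *)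

theory Defs
  imports Complex_Main "HOL-Number_Theory.Cong"
begin

function base32 :: "nat \<Rightarrow> nat list" where
  "base32 n = (if n = 0 then [] else base32 ((2 * n) div 3) @ [(2 * n) mod 3])"
  by auto
termination
  by (relation "measure id") auto

definition tm32 :: "nat \<Rightarrow> nat" where
  "tm32 n = sum_list (base32 n) mod 2"

definition Ccount :: "nat \<Rightarrow> nat \<Rightarrow> int \<Rightarrow> nat \<Rightarrow> nat" where
  "Ccount n c k N = card {i. i < N \<and> tm32 i = c \<and> [int i = k] (mod 2 ^ n)}"

end

theory Submission
  imports Defs "HOL-Library.Real_Mod" "HOL-Analysis.Convex"
begin

(* Write s x = (-1)^(t x) and S a N = (SUM x<N. s x * e (a * x)) with e a = exp (2 pi i a).
  The recursion t (3n) = t (3n+1) = t (2n), t (3n+2) = 1 - t (2n+1) gives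
  S a (3Q) = A a * S (3a/2) (2Q) + B a * S (3a/2 + 1/2) (2Q), where
  |A a| = |cos (pi a) - 1/2| and |B a| = |cos (pi a) + 1/2|.
  The signed count of x < N in a residue class mod 2^n is a combination of 2^n sums S;
  applying the recursion 2i times at N = 9^i Q turns it into a combination of 2^(n+2i) sums
  of length 4^i Q at the frequencies 9^i b / 2^(n+2i), and the squared l2-norm of the
  coefficients grows by a factor at most 4 per two steps.  Cauchy-Schwarz together with the
  Parseval bound for these sums gives |signed count| <= 8^i (Q + 2^n) = o(9^i Q), so both
  letters have density 1/2^(n+1) in every residue class mod 2^n. *)

declare base32.simps[simp del]

lemma tm32_rec: "tm32 n = (tm32 (2 * n div 3) + 2 * n mod 3) mod 2"
proof (cases "n = 0")
  case True
  then show ?thesis by (simp add: tm32_def base32.simps)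
next
  case False
  then show ?thesis unfolding tm32_def by (subst base32.simps) (simp add: mod_add_left_eq)
qed

definition tm_sign :: "nat \<Rightarrow> real" where
  "tm_sign n = (-1) ^ tm32 n"

lemma tm_sign_rec: "tm_sign n = (-1) ^ (2 * n mod 3) * tm_sign (2 * n div 3)"
  unfolding tm_sign_def tm32_rec[of n] by (simp add: minus_one_power_iff)

lemma tm_sign_3n: "tm_sign (3 * n) = tm_sign (2 * n)"
  using tm_sign_rec[of "3 * n"] by simp

lemma tm_sign_3n_1: "tm_sign (3 * n + 1) = tm_sign (2 * n)"
proof -
  have "2 * (3 * n + 1) div 3 = 2 * n" "2 * (3 * n + 1) mod 3 = 2" by presburger+
  then show ?thesis using tm_sign_rec[of "3 * n + 1"] by simp
qed

lemma tm_sign_3n_2: "tm_sign (3 * n + 2) = - tm_sign (2 * n + 1)"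
proof -
  have "2 * (3 * n + 2) div 3 = 2 * n + 1" "2 * (3 * n + 2) mod 3 = 1" by presburger+
  then show ?thesis using tm_sign_rec[of "3 * n + 2"] by simp
qed

lemma abs_tm_sign [simp]: "\<bar>tm_sign n\<bar> = 1"
  by (simp add: tm_sign_def)

lemma tm_sign_generating_poly:
  fixes z :: complex
  shows "(\<Sum>x<3 * Q. of_real (tm_sign x) * z ^ (2 * x))
       = (\<Sum>y<2 * Q. of_real (tm_sign y) * (if even y then 1 + z ^ 2 else - z) * z ^ (3 * y))"
proof (induction Q)
  case (Suc Q)
  define s where "s x = complex_of_real (tm_sign x)" for x
  have "(\<Sum>x<3 * Suc Q. s x * z ^ (2 * x)) = (\<Sum>x<3 * Q. s x * z ^ (2 * x))
      + (s (3 * Q) + s (3 * Q + 1) * z ^ 2 + s (3 * Q + 2) * z ^ 4) * z ^ (6 * Q)"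
  proof -
    have e: "3 * Suc Q = Suc (Suc (Suc (3 * Q)))" "2 * Suc (3 * Q) = 6 * Q + 2"
      "2 * Suc (Suc (3 * Q)) = 6 * Q + 4" by simp_all
    show ?thesis unfolding e(1) sum.lessThan_Suc e(2,3)
      by (simp add: algebra_simps power_add power2_eq_square)
  qed
  also have "s (3 * Q) + s (3 * Q + 1) * z ^ 2 + s (3 * Q + 2) * z ^ 4
      = s (2 * Q) * (1 + z ^ 2) - s (2 * Q + 1) * z ^ 4"
    unfolding s_def tm_sign_3n tm_sign_3n_1 tm_sign_3n_2 by (simp add: algebra_simps)
  also have "(\<Sum>y<2 * Suc Q. s y * (if even y then 1 + z ^ 2 else - z) * z ^ (3 * y))
      = (\<Sum>y<2 * Q. s y * (if even y then 1 + z ^ 2 else - z) * z ^ (3 * y))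
      + (s (2 * Q) * (1 + z ^ 2) - s (2 * Q + 1) * z ^ 4) * z ^ (6 * Q)"
  proof -
    have e: "2 * Suc Q = Suc (Suc (2 * Q))" "3 * Suc (2 * Q) = 6 * Q + 3" by simp_all
    show ?thesis unfolding e(1) sum.lessThan_Suc e(2)
      by (simp add: algebra_simps power_add power_numeral_reduce)
  qed
  ultimately show ?case using Suc.IH unfolding s_def by simp
qed simp

definition cis2pi :: "real \<Rightarrow> complex" where
  "cis2pi x = cis (2 * pi * x)"

lemma cis2pi_add: "cis2pi (x + y) = cis2pi x * cis2pi y"
  unfolding cis2pi_def by (simp add: cis_mult distrib_left)

lemma cis2pi_of_nat_mult: "cis2pi (real n * x) = cis2pi x ^ n"
  unfolding cis2pi_def DeMoivre by (simp add: mult.left_commute)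

lemma cis2pi_eq_1_iff: "cis2pi x = 1 \<longleftrightarrow> x \<in> \<int>"
  unfolding cis2pi_def cis_eq_1_iff by (auto elim!: Ints_cases)

lemma cis2pi_half: "cis2pi (1 / 2) = -1"
  by (simp add: cis2pi_def)

lemma norm_cis2pi [simp]: "cmod (cis2pi x) = 1"
  by (simp add: cis2pi_def)

lemma cnj_cis2pi: "cnj (cis2pi x) = cis2pi (- x)"
  by (simp add: cis2pi_def cis_cnj)

lemma Re_cis2pi: "Re (cis2pi x) = cos (2 * pi * x)"
  by (simp add: cis2pi_def)

definition exp_sum :: "(nat \<Rightarrow> real) \<Rightarrow> real \<Rightarrow> nat \<Rightarrow> complex" where
  "exp_sum f a N = (\<Sum>x<N. of_real (f x) * cis2pi (a * real x))"

lemma exp_sum_add_Ints: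
  assumes "t \<in> \<int>"
  shows "exp_sum f (a + t) N = exp_sum f a N"
proof -
  have "cis2pi ((a + t) * real x) = cis2pi (a * real x)" for x
  proof -
    have "t * real x \<in> \<int>" using assms by (simp add: Ints_mult)
    then show ?thesis by (simp add: distrib_right cis2pi_add cis2pi_eq_1_iff)
  qed
  then show ?thesis unfolding exp_sum_def by simp
qed

lemma exp_sum_of_nat_mult:
  "exp_sum f (real j * a) N = (\<Sum>x<N. of_real (f x) * cis2pi a ^ (j * x))"
  unfolding exp_sum_def by (simp add: mult.commute mult.left_commute flip: cis2pi_of_nat_mult)

(* With v = cis2pi (a / 2), these are determined by factor0 a + factor1 a = 1 + v^2 and
  factor0 a - factor1 a = - v, the two weights in tm_sign_generating_poly. *)
definition factor0 :: "real \<Rightarrow> complex" where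
  "factor0 a = (1 - cis2pi (a / 2) + cis2pi (a / 2) ^ 2) / 2"

definition factor1 :: "real \<Rightarrow> complex" where
  "factor1 a = (1 + cis2pi (a / 2) + cis2pi (a / 2) ^ 2) / 2"

lemma exp_sum_tm_sign_triple:
  "exp_sum tm_sign a (3 * Q)
   = factor0 a * exp_sum tm_sign (3 * a / 2) (2 * Q)
   + factor1 a * exp_sum tm_sign (3 * a / 2 + 1 / 2) (2 * Q)"
proof -
  define v where "v = cis2pi (a / 2)"
  define s where "s x = complex_of_real (tm_sign x)" for x
  have "exp_sum tm_sign a (3 * Q) = (\<Sum>x<3 * Q. s x * v ^ (2 * x))"
    using exp_sum_of_nat_mult[of tm_sign 2 "a / 2"] by (simp add: s_def v_def)
  also have "\<dots> = (\<Sum>y<2 * Q. s y * (if even y then 1 + v ^ 2 else - v) * v ^ (3 * y))"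
    unfolding s_def by (rule tm_sign_generating_poly)
  also have "\<dots> = factor0 a * (\<Sum>y<2 * Q. s y * v ^ (3 * y))
      + factor1 a * (\<Sum>y<2 * Q. s y * ((-1) ^ y * v ^ (3 * y)))"
  proof -
    have "(if even y then 1 + v ^ 2 else - v) = factor0 a + (-1) ^ y * factor1 a" for y
      by (simp add: factor0_def factor1_def v_def minus_one_power_iff field_simps)
    then show ?thesis by (simp add: algebra_simps sum_distrib_left sum.distrib)
  qed
  also have "(\<Sum>y<2 * Q. s y * v ^ (3 * y)) = exp_sum tm_sign (3 * a / 2) (2 * Q)"
    using exp_sum_of_nat_mult[of tm_sign 3 "a / 2"] by (simp add: s_def v_def)
  also have "(\<Sum>y<2 * Q. s y * ((-1) ^ y * v ^ (3 * y)))
      = exp_sum tm_sign (3 * a / 2 + 1 / 2) (2 * Q)"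
  proof -
    have "cis2pi ((3 * a / 2 + 1 / 2) * real y) = (-1) ^ y * v ^ (3 * y)" for y
    proof -
      have e: "(3 * a / 2 + 1 / 2) * real y = real (3 * y) * (a / 2) + real y * (1 / 2)"
        by (simp add: algebra_simps)
      show ?thesis unfolding e v_def cis2pi_add cis2pi_of_nat_mult cis2pi_half by simp
    qed
    then show ?thesis unfolding exp_sum_def s_def by simp
  qed
  finally show ?thesis .
qed

lemma quadratic_on_unit_circle:
  assumes "cmod z = 1"
  shows "1 + of_real t * z + z ^ 2 = z * of_real (2 * Re z + t)"
proof -
  have "z * cnj z = 1"
    using assms by (simp flip: complex_norm_square)
  moreover have "z * of_real (2 * Re z + t) = z * (z + cnj z) + of_real t * z"
    by (simp add: complex_add_cnj algebra_simps)
  ultimately show ?thesis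
    by (simp add: algebra_simps power2_eq_square)
qed

lemma norm_factor0: "cmod (factor0 a) ^ 2 = (cos (pi * a) - 1 / 2) ^ 2"
proof -
  have "factor0 a = cis2pi (a / 2) * of_real (2 * cos (pi * a) - 1) / 2"
    using quadratic_on_unit_circle[of "cis2pi (a / 2)" "-1"]
    by (simp add: factor0_def Re_cis2pi)
  then have norm: "cmod (factor0 a) = \<bar>2 * cos (pi * a) - 1\<bar> / 2"
    by (simp only: norm_divide norm_mult norm_cis2pi norm_of_real) simp
  show ?thesis
    unfolding norm power_divide power2_abs by (simp add: power2_eq_square field_simps)
qed

lemma norm_factor1: "cmod (factor1 a) ^ 2 = (cos (pi * a) + 1 / 2) ^ 2"
proof -
  have "factor1 a = cis2pi (a / 2) * of_real (2 * cos (pi * a) + 1) / 2"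
    using quadratic_on_unit_circle[of "cis2pi (a / 2)" 1]
    by (simp add: factor1_def Re_cis2pi)
  then have norm: "cmod (factor1 a) = \<bar>2 * cos (pi * a) + 1\<bar> / 2"
    by (simp only: norm_divide norm_mult norm_cis2pi norm_of_real) simp
  show ?thesis
    unfolding norm power_divide power2_abs by (simp add: power2_eq_square field_simps)
qed

lemma cis2pi_half_add_half: "cis2pi ((a + 1) / 2) = - cis2pi (a / 2)"
  using cis2pi_add[of "a / 2" "1 / 2"] by (simp add: cis2pi_half add_divide_distrib)

lemma factor0_add_1: "factor0 (a + 1) = factor1 a"
  by (simp add: factor0_def factor1_def cis2pi_half_add_half)

lemma factor1_add_1: "factor1 (a + 1) = factor0 a"
  by (simp add: factor0_def factor1_def cis2pi_half_add_half)

definition weight_transfer :: "(real \<Rightarrow> real) \<Rightarrow> real \<Rightarrow> real" where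
  "weight_transfer w a =
     cmod (factor0 a) ^ 2 * w (3 * a / 2) + cmod (factor1 a) ^ 2 * w (3 * a / 2 + 1 / 2)"

lemma weight_transfer_periodic:
  assumes "\<And>x. w (x + 1) = w x"
  shows "weight_transfer w (a + 1) = weight_transfer w a"
proof -
  have "w (3 * (a + 1) / 2) = w (3 * a / 2 + 1 / 2)"
    using assms[of "3 * a / 2 + 1 / 2"] by (simp add: field_simps)
  moreover have "w (3 * (a + 1) / 2 + 1 / 2) = w (3 * a / 2)"
    using assms[of "3 * a / 2"] assms[of "3 * a / 2 + 1"] by (simp add: field_simps)
  ultimately show ?thesis
    unfolding weight_transfer_def factor0_add_1 factor1_add_1 by simp
qed

lemma weight_transfer_const: "weight_transfer (\<lambda>_. 1) a = 2 * cos (pi * a) ^ 2 + 1 / 2"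
  unfolding weight_transfer_def norm_factor0 norm_factor1
  by (simp add: power2_eq_square field_simps)

lemma weight_transfer_twice_le: "weight_transfer (weight_transfer (\<lambda>_. 1)) a \<le> 4"
proof -
  define c where "c = cos (pi * a)"
  define C where "C = cos (pi * (3 * a / 2))"
  have "2 * C ^ 2 = 1 + cos (3 * (pi * a))"
    using cos_double_cos[of "pi * (3 * a / 2)"] by (simp add: C_def algebra_simps)
  also have "cos (3 * (pi * a)) = 4 * c ^ 3 - 3 * c"
    unfolding c_def by (rule cos_treble_cos)
  finally have C2: "C ^ 2 = (1 + 4 * c ^ 3 - 3 * c) / 2" by simp
  have "cos (pi * (3 * a / 2 + 1 / 2)) ^ 2 = 1 - C ^ 2"
    by (simp add: C_def distrib_left cos_add sin_squared_eq)
  then have "weight_transfer (weight_transfer (\<lambda>_. 1)) a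
      = (c - 1 / 2) ^ 2 * (2 * C ^ 2 + 1 / 2) + (c + 1 / 2) ^ 2 * (2 * (1 - C ^ 2) + 1 / 2)"
    unfolding weight_transfer_def[of "weight_transfer (\<lambda>_. 1)"] weight_transfer_const
      norm_factor0 norm_factor1 by (simp add: C_def c_def)
  also have "\<dots> = 3 / 4 + 9 * c ^ 2 - 8 * c ^ 4"
    unfolding C2 by (simp add: field_simps power2_eq_square power3_eq_cube power4_eq_xxxx)
  also have "\<dots> \<le> 4"
    using zero_le_power2[of "c ^ 2 - 9 / 16"]
    by (simp add: power2_eq_square power4_eq_xxxx algebra_simps)
  finally show ?thesis .
qed

lemma sum_lessThan_double:
  fixes g :: "nat \<Rightarrow> 'a::comm_monoid_add"
  shows "(\<Sum>b<2 * L. g b) = (\<Sum>b<L. g b + g (L + b))"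
proof -
  have "(\<Sum>b<2 * L. g b) = (\<Sum>b<L. g b) + (\<Sum>b\<in>{0 + L..<L + L}. g b)"
    using sum.atLeastLessThan_concat[of 0 L "2 * L" g] by (simp add: atLeast0LessThan mult_2)
  also have "(\<Sum>b\<in>{0 + L..<L + L}. g b) = (\<Sum>b<L. g (L + b))"
    by (simp only: sum.shift_bounds_nat_ivl atLeast0LessThan add.commute)
  finally show ?thesis by (simp add: sum.distrib)
qed

lemma periodic_add_of_nat:
  assumes "\<And>x. w (x + 1) = w x"
  shows "w (x + real n) = w x"
proof (induction n)
  case (Suc n)
  have "x + real (Suc n) = (x + real n) + 1" by simp
  then show ?case by (simp only: assms Suc.IH)
qed simp

(* c on {..<L} weights the sums exp_sum tm_sign (u * b / L), u odd.  In the refinement on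
  {..<2 * L}, indices b and L + b carry the two terms of exp_sum_tm_sign_triple at
  a = u * b / L: their frequencies 3 u b / (2 L) and 3 u (L + b) / (2 L) are 3 a / 2 and
  3 a / 2 + 1 / 2 modulo 1. *)
definition refine_coeffs :: "nat \<Rightarrow> nat \<Rightarrow> (nat \<Rightarrow> complex) \<Rightarrow> nat \<Rightarrow> complex" where
  "refine_coeffs u L c b =
     (if b < L then c b * factor0 (real u * real b / real L)
      else c (b - L) * factor1 (real u * real (b - L) / real L))"

lemma refine_frequency_shift:
  assumes "odd u" "0 < L"
  obtains t :: nat where
    "real (3 * u) * real (L + b) / real (2 * L)
     = 3 * (real u * real b / real L) / 2 + 1 / 2 + real t"
proof -
  obtain k where "u = 2 * k + 1" using assms(1) oddE by blast
  then have "real (3 * u) * real (L + b) / real (2 * L)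
      = 3 * (real u * real b / real L) / 2 + 1 / 2 + real (3 * k + 1)"
    using assms(2) by (simp add: field_simps)
  then show ?thesis by (rule that)
qed

lemma exp_sum_refine:
  assumes "odd u" "0 < L"
  shows "(\<Sum>b<L. c b * exp_sum tm_sign (real u * real b / real L) (3 * Q))
       = (\<Sum>b<2 * L. refine_coeffs u L c b
            * exp_sum tm_sign (real (3 * u) * real b / real (2 * L)) (2 * Q))"
proof -
  have block: "refine_coeffs u L c b
        * exp_sum tm_sign (real (3 * u) * real b / real (2 * L)) (2 * Q)
      + refine_coeffs u L c (L + b)
        * exp_sum tm_sign (real (3 * u) * real (L + b) / real (2 * L)) (2 * Q)
      = c b * exp_sum tm_sign (real u * real b / real L) (3 * Q)" if "b < L" for b
  proof -
    define a where "a = real u * real b / real L"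
    obtain t :: nat
      where t: "real (3 * u) * real (L + b) / real (2 * L) = 3 * a / 2 + 1 / 2 + real t"
      using refine_frequency_shift[OF assms] unfolding a_def by blast
    have "real (3 * u) * real b / real (2 * L) = 3 * a / 2"
      unfolding a_def by simp
    then show ?thesis
      using that unfolding t exp_sum_add_Ints[OF Ints_of_nat] exp_sum_tm_sign_triple
      by (simp add: refine_coeffs_def a_def algebra_simps)
  qed
  then show ?thesis
    unfolding sum_lessThan_double by (intro sum.cong refl) (simp add: block)
qed

lemma weighted_energy_refine:
  assumes "odd u" "0 < L" "\<And>x. w (x + 1) = w x"
  shows "(\<Sum>b<2 * L. cmod (refine_coeffs u L c b) ^ 2 * w (real (3 * u) * real b / real (2 * L)))
       = (\<Sum>b<L. cmod (c b) ^ 2 * weight_transfer w (real u * real b / real L))"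
proof -
  have block: "cmod (refine_coeffs u L c b) ^ 2 * w (real (3 * u) * real b / real (2 * L))
      + cmod (refine_coeffs u L c (L + b)) ^ 2 * w (real (3 * u) * real (L + b) / real (2 * L))
      = cmod (c b) ^ 2 * weight_transfer w (real u * real b / real L)" if "b < L" for b
  proof -
    define a where "a = real u * real b / real L"
    obtain t :: nat
      where t: "real (3 * u) * real (L + b) / real (2 * L) = 3 * a / 2 + 1 / 2 + real t"
      using refine_frequency_shift[OF assms(1,2)] unfolding a_def by blast
    have "real (3 * u) * real b / real (2 * L) = 3 * a / 2"
      unfolding a_def by simp
    then show ?thesis
      using that unfolding t periodic_add_of_nat[of w, OF assms(3)]
      by (simp add: refine_coeffs_def weight_transfer_def a_def norm_mult power_mult_distrib
          algebra_simps)
  qed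
  then show ?thesis
    unfolding sum_lessThan_double by (intro sum.cong refl) (simp add: block)
qed

lemma energy_refine_twice:
  assumes "odd u" "0 < L"
  shows "(\<Sum>b<4 * L. cmod (refine_coeffs (3 * u) (2 * L) (refine_coeffs u L c) b) ^ 2)
         \<le> 4 * (\<Sum>b<L. cmod (c b) ^ 2)"
proof -
  have "(\<Sum>b<4 * L. cmod (refine_coeffs (3 * u) (2 * L) (refine_coeffs u L c) b) ^ 2)
      = (\<Sum>b<2 * (2 * L). cmod (refine_coeffs (3 * u) (2 * L) (refine_coeffs u L c) b) ^ 2
           * (\<lambda>_. 1) (real (3 * (3 * u)) * real b / real (2 * (2 * L))))"
    by simp
  also have "\<dots> = (\<Sum>b<2 * L. cmod (refine_coeffs u L c b) ^ 2
           * weight_transfer (\<lambda>_. 1) (real (3 * u) * real b / real (2 * L)))"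
    using assms by (intro weighted_energy_refine) simp_all
  also have "\<dots> = (\<Sum>b<L. cmod (c b) ^ 2
           * weight_transfer (weight_transfer (\<lambda>_. 1)) (real u * real b / real L))"
    using assms by (intro weighted_energy_refine weight_transfer_periodic) simp_all
  also have "\<dots> \<le> (\<Sum>b<L. cmod (c b) ^ 2 * 4)"
    by (intro sum_mono mult_left_mono weight_transfer_twice_le) simp
  finally show ?thesis by (simp add: sum_distrib_left mult.commute)
qed

fun refine_coeffs_iter :: "nat \<Rightarrow> nat \<Rightarrow> (nat \<Rightarrow> complex) \<Rightarrow> nat \<Rightarrow> complex" where
  "refine_coeffs_iter n 0 c = c"
| "refine_coeffs_iter n (Suc m) c = refine_coeffs (3 ^ m) (2 ^ (n + m)) (refine_coeffs_iter n m c)"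

lemma exp_sum_refine_iter:
  "(\<Sum>b<2 ^ n. c b * exp_sum tm_sign (real b / 2 ^ n) (3 ^ m * Q))
   = (\<Sum>b<2 ^ (n + m). refine_coeffs_iter n m c b
        * exp_sum tm_sign (3 ^ m * real b / 2 ^ (n + m)) (2 ^ m * Q))"
proof (induction m arbitrary: Q)
  case (Suc m)
  have "(\<Sum>b<2 ^ n. c b * exp_sum tm_sign (real b / 2 ^ n) (3 ^ Suc m * Q))
      = (\<Sum>b<2 ^ (n + m). refine_coeffs_iter n m c b
           * exp_sum tm_sign (real (3 ^ m) * real b / real (2 ^ (n + m))) (3 * (2 ^ m * Q)))"
    using Suc.IH[of "3 * Q"] by (simp add: mult_ac)
  also have "\<dots> = (\<Sum>b<2 * 2 ^ (n + m). refine_coeffs_iter n (Suc m) c b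
           * exp_sum tm_sign (real (3 * 3 ^ m) * real b / real (2 * 2 ^ (n + m)))
               (2 * (2 ^ m * Q)))"
    by (simp only: refine_coeffs_iter.simps) (rule exp_sum_refine; simp)
  finally show ?case by (simp add: mult_ac)
qed simp

lemma energy_refine_iter:
  "(\<Sum>b<2 ^ (n + 2 * i). cmod (refine_coeffs_iter n (2 * i) c b) ^ 2)
   \<le> 4 ^ i * (\<Sum>b<2 ^ n. cmod (c b) ^ 2)"
proof (induction i)
  case (Suc i)
  have "refine_coeffs_iter n (2 * Suc i) c
      = refine_coeffs (3 * 3 ^ (2 * i)) (2 * 2 ^ (n + 2 * i))
          (refine_coeffs (3 ^ (2 * i)) (2 ^ (n + 2 * i)) (refine_coeffs_iter n (2 * i) c))"
    by simp
  moreover have "(2::nat) ^ (n + 2 * Suc i) = 4 * 2 ^ (n + 2 * i)"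
    by (simp add: power_add)
  ultimately have "(\<Sum>b<2 ^ (n + 2 * Suc i). cmod (refine_coeffs_iter n (2 * Suc i) c b) ^ 2)
      \<le> 4 * (\<Sum>b<2 ^ (n + 2 * i). cmod (refine_coeffs_iter n (2 * i) c b) ^ 2)"
    by (simp only:) (rule energy_refine_twice; simp)
  with Suc.IH show ?case by simp
qed simp

lemma sum_cis2pi_multiples:
  assumes "0 < K"
  shows "(\<Sum>b<K. cis2pi (real b * of_int d / real K)) = (if int K dvd d then of_nat K else 0)"
proof -
  define z where "z = cis2pi (of_int d / real K)"
  have powers: "cis2pi (real b * of_int d / real K) = z ^ b" for b
    unfolding z_def by (simp flip: cis2pi_of_nat_mult)
  have z_eq_1: "z = 1 \<longleftrightarrow> int K dvd d"
    using assms of_int_div_of_int_in_Ints_iff[of d "int K", where 'a = real]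
    unfolding z_def cis2pi_eq_1_iff by simp
  have "z ^ K = 1"
    using assms unfolding z_def by (simp add: cis2pi_eq_1_iff flip: cis2pi_of_nat_mult)
  then show ?thesis
    using geometric_sum[of z K] z_eq_1 unfolding powers by auto
qed

lemma dvd_diff_iff_mod_eq:
  assumes "coprime u K"
  shows "int K dvd int u * (int x - int y) \<longleftrightarrow> x mod K = y mod K"
proof -
  have "coprime (int K) (int u)"
    using assms by (simp add: coprime_commute)
  then have "int K dvd int u * (int x - int y) \<longleftrightarrow> [int x = int y] (mod int K)"
    by (simp add: coprime_dvd_mult_right_iff cong_iff_dvd_diff)
  then show ?thesis by (simp add: cong_def flip: zmod_int)
qed

lemma sum_norm_exp_sum_sq:
  assumes "coprime u K" "0 < K"
  shows "(\<Sum>b<K. cmod (exp_sum f (real u * real b / real K) N) ^ 2)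
       = real K * (\<Sum>x<N. \<Sum>y<N. if x mod K = y mod K then f x * f y else 0)"
proof -
  have product: "exp_sum f a N * cnj (exp_sum f a N)
      = (\<Sum>x<N. \<Sum>y<N. of_real (f x * f y) * cis2pi (a * (real x - real y)))" for a
  proof -
    have "cis2pi (a * (real x - real y)) = cis2pi (a * real x) * cis2pi (- (a * real y))" for x y
      by (simp add: right_diff_distrib flip: cis2pi_add)
    then show ?thesis
      unfolding exp_sum_def cnj_sum sum_product by (simp add: cnj_cis2pi mult_ac)
  qed
  have "complex_of_real (\<Sum>b<K. cmod (exp_sum f (real u * real b / real K) N) ^ 2)
      = (\<Sum>b<K. \<Sum>x<N. \<Sum>y<N. of_real (f x * f y)
           * cis2pi (real b * of_int (int u * (int x - int y)) / real K))"
    unfolding of_real_sum complex_norm_square product by (simp add: mult_ac)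
  also have "\<dots> = (\<Sum>x<N. \<Sum>y<N. of_real (f x * f y)
      * (\<Sum>b<K. cis2pi (real b * of_int (int u * (int x - int y)) / real K)))"
    by (simp add: sum_distrib_left sum.swap[of _ "{..<K}"])
  also have "\<dots> = (\<Sum>x<N. \<Sum>y<N. of_real (real K * (if x mod K = y mod K then f x * f y else 0)))"
    unfolding sum_cis2pi_multiples[OF assms(2)] dvd_diff_iff_mod_eq[OF assms(1)]
    by (intro sum.cong refl) simp
  also have "\<dots>
      = complex_of_real (real K * (\<Sum>x<N. \<Sum>y<N. if x mod K = y mod K then f x * f y else 0))"
    by (simp only: of_real_sum sum_distrib_left)
  finally show ?thesis by (simp only: of_real_eq_iff)
qed

lemma card_residue_class_multiple:
  assumes "r < K"
  shows "card {y. y < q * K \<and> y mod K = r} = q"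
proof -
  have "{y. y < q * K \<and> y mod K = r} = (\<lambda>j. j * K + r) ` {..<q}"
  proof (intro set_eqI iffI)
    fix y assume y: "y \<in> {y. y < q * K \<and> y mod K = r}"
    then have "y = (y div K) * K + r" using div_mult_mod_eq[of y K] by simp
    moreover have "y div K < q" using y by (simp add: less_mult_imp_div_less)
    ultimately show "y \<in> (\<lambda>j. j * K + r) ` {..<q}" by blast
  next
    fix y assume "y \<in> (\<lambda>j. j * K + r) ` {..<q}"
    then obtain j where j: "j < q" "y = j * K + r" by blast
    have "j * K + r < (j + 1) * K" using assms by simp
    also have "\<dots> \<le> q * K" using j(1) by (intro mult_right_mono) simp_all
    finally show "y \<in> {y. y < q * K \<and> y mod K = r}" using j assms by simp
  qed
  moreover have "inj_on (\<lambda>j. j * K + r) {..<q}"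
    using assms by (auto simp: inj_on_def)
  ultimately show ?thesis by (simp add: card_image)
qed

lemma card_residue_class_bounds:
  assumes "r < K"
  shows "N div K \<le> card {y. y < N \<and> y mod K = r}"
    and "card {y. y < N \<and> y mod K = r} \<le> N div K + 1"
proof -
  have lower: "N div K * K \<le> N" and upper: "N < (N div K + 1) * K"
    using assms by (simp_all add: dividend_less_div_times)
  have "card {y. y < N div K * K \<and> y mod K = r} \<le> card {y. y < N \<and> y mod K = r}"
    by (rule card_mono) (simp_all add: Collect_mono_iff less_le_trans[OF _ lower])
  moreover have "card {y. y < N \<and> y mod K = r} \<le> card {y. y < (N div K + 1) * K \<and> y mod K = r}"
    by (rule card_mono) (use upper in auto)
  ultimately show "N div K \<le> card {y. y < N \<and> y mod K = r}"
    and "card {y. y < N \<and> y mod K = r} \<le> N div K + 1"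
    unfolding card_residue_class_multiple[OF assms] by simp_all
qed

lemma card_filter_lessThan_eq_sum:
  fixes N :: nat
  shows "real (card {x. x < N \<and> P x}) = (\<Sum>x<N. if P x then 1 else 0)"
proof -
  have "(\<Sum>x<N. if P x then 1 else 0) = (\<Sum>x\<in>{x \<in> {..<N}. P x}. 1 :: real)"
    by (rule sum.inter_filter[symmetric]) simp
  also have "{x \<in> {..<N}. P x} = {x. x < N \<and> P x}"
    by auto
  finally show ?thesis by simp
qed

lemma sum_norm_exp_sum_sq_le:
  assumes "coprime u K" "0 < K" and bounded: "\<And>x. \<bar>f x\<bar> \<le> 1"
  shows "(\<Sum>b<K. cmod (exp_sum f (real u * real b / real K) N) ^ 2) \<le> real N * (real N + real K)"
proof -
  have row: "(\<Sum>y<N. if x mod K = y mod K then f x * f y else 0) \<le> real N / real K + 1" for x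
  proof -
    have "f x * f y \<le> 1" for y
    proof -
      have "\<bar>f x * f y\<bar> \<le> 1"
        unfolding abs_mult using bounded by (intro mult_le_one) simp_all
      then show ?thesis by simp
    qed
    then have "(\<Sum>y<N. if x mod K = y mod K then f x * f y else 0)
        \<le> (\<Sum>y<N. if y mod K = x mod K then 1 else 0)"
      by (intro sum_mono) auto
    also have "\<dots> = real (card {y. y < N \<and> y mod K = x mod K})"
      by (rule card_filter_lessThan_eq_sum[symmetric])
    also have "\<dots> \<le> real (N div K) + 1"
      using card_residue_class_bounds(2)[of "x mod K" K N] assms(2) by simp
    also have "\<dots> \<le> real N / real K + 1"
      by (simp add: of_nat_div_le_of_nat)
    finally show ?thesis .
  qed
  have "(\<Sum>b<K. cmod (exp_sum f (real u * real b / real K) N) ^ 2)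
      = real K * (\<Sum>x<N. \<Sum>y<N. if x mod K = y mod K then f x * f y else 0)"
    using assms(1,2) by (rule sum_norm_exp_sum_sq)
  also have "\<dots> \<le> real K * (\<Sum>x<N. real N / real K + 1)"
    by (intro mult_left_mono sum_mono row) simp
  also have "\<dots> = real N * (real N + real K)"
    using assms(2) by (simp add: field_simps)
  finally show ?thesis .
qed

definition tm_discrepancy :: "nat \<Rightarrow> int \<Rightarrow> nat \<Rightarrow> real" where
  "tm_discrepancy n k N = (\<Sum>x<N. if [int x = k] (mod 2 ^ n) then tm_sign x else 0)"

definition residue_coeff :: "nat \<Rightarrow> int \<Rightarrow> nat \<Rightarrow> complex" where
  "residue_coeff n k b = cis2pi (- (real b * of_int k / 2 ^ n)) / 2 ^ n"

lemma sum_residue_coeff_cis2pi: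
  "(\<Sum>b<2 ^ n. residue_coeff n k b * cis2pi (real b / 2 ^ n * real x))
   = (if [int x = k] (mod 2 ^ n) then 1 else 0)"
proof -
  have "residue_coeff n k b * cis2pi (real b / 2 ^ n * real x)
      = cis2pi (real b * of_int (int x - k) / real (2 ^ n)) / 2 ^ n" for b
    unfolding residue_coeff_def by (simp add: field_simps flip: cis2pi_add)
  then have "(\<Sum>b<2 ^ n. residue_coeff n k b * cis2pi (real b / 2 ^ n * real x))
      = (\<Sum>b<2 ^ n. cis2pi (real b * of_int (int x - k) / real (2 ^ n))) / 2 ^ n"
    by (simp only: sum_divide_distrib)
  also have "\<dots> = (if [int x = k] (mod 2 ^ n) then 1 else 0)"
    using sum_cis2pi_multiples[of "2 ^ n" "int x - k"]
    by (simp add: cong_iff_dvd_diff)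
  finally show ?thesis .
qed

lemma tm_discrepancy_fourier:
  "of_real (tm_discrepancy n k N)
   = (\<Sum>b<2 ^ n. residue_coeff n k b * exp_sum tm_sign (real b / 2 ^ n) N)"
proof -
  have "(\<Sum>b<2 ^ n. residue_coeff n k b * exp_sum tm_sign (real b / 2 ^ n) N)
      = (\<Sum>x<N. of_real (tm_sign x)
          * (\<Sum>b<2 ^ n. residue_coeff n k b * cis2pi (real b / 2 ^ n * real x)))"
    unfolding exp_sum_def by (simp add: sum_distrib_left sum.swap[of _ "{..<N}"] mult_ac)
  also have "\<dots> = (\<Sum>x<N. of_real (if [int x = k] (mod 2 ^ n) then tm_sign x else 0))"
    unfolding sum_residue_coeff_cis2pi by (intro sum.cong refl) simp
  finally show ?thesis
    unfolding tm_discrepancy_def by (simp add: of_real_sum)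
qed

lemma sum_norm_residue_coeff_le: "(\<Sum>b<2 ^ n. cmod (residue_coeff n k b) ^ 2) \<le> 1"
proof -
  have "(\<Sum>b<2 ^ n. cmod (residue_coeff n k b) ^ 2) = 2 ^ n * (1 / 2 ^ n) ^ 2"
    by (simp add: residue_coeff_def norm_divide norm_power)
  also have "\<dots> \<le> 1"
    by (simp add: power2_eq_square)
  finally show ?thesis .
qed

lemma norm_sum_mult_le:
  fixes c E :: "'a \<Rightarrow> complex"
  assumes "(\<Sum>b\<in>A. cmod (c b) ^ 2) \<le> C ^ 2" "(\<Sum>b\<in>A. cmod (E b) ^ 2) \<le> D ^ 2"
    and "0 \<le> C" "0 \<le> D"
  shows "cmod (\<Sum>b\<in>A. c b * E b) \<le> C * D"
proof -
  have "cmod (\<Sum>b\<in>A. c b * E b) \<le> (\<Sum>b\<in>A. cmod (c b) * cmod (E b))"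
    using norm_sum[of "\<lambda>b. c b * E b" A] by (simp add: norm_mult)
  also have "\<dots> \<le> C * D"
  proof (rule power2_le_imp_le)
    have "(\<Sum>b\<in>A. cmod (c b) * cmod (E b)) ^ 2
        \<le> (\<Sum>b\<in>A. cmod (c b) ^ 2) * (\<Sum>b\<in>A. cmod (E b) ^ 2)"
      by (rule Cauchy_Schwarz_ineq_sum)
    also have "\<dots> \<le> C ^ 2 * D ^ 2"
      using assms by (intro mult_mono) (simp_all add: sum_nonneg)
    finally show "(\<Sum>b\<in>A. cmod (c b) * cmod (E b)) ^ 2 \<le> (C * D) ^ 2"
      by (simp add: power_mult_distrib)
  qed (use assms in simp)
  finally show ?thesis .
qed

lemma energy_residue_coeff_iter:
  "(\<Sum>b<2 ^ (n + 2 * i). cmod (refine_coeffs_iter n (2 * i) (residue_coeff n k) b) ^ 2)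
   \<le> (2 ^ i) ^ 2" (is "?energy \<le> _")
proof -
  have "?energy \<le> 4 ^ i * (\<Sum>b<2 ^ n. cmod (residue_coeff n k b) ^ 2)"
    by (rule energy_refine_iter)
  also have "\<dots> \<le> 4 ^ i"
    using sum_norm_residue_coeff_le[of n k] by (simp add: mult_left_le)
  finally show ?thesis
    by (simp add: power2_eq_square flip: power_mult_distrib)
qed

lemma energy_exp_sum_tm_sign:
  "(\<Sum>b<2 ^ (n + 2 * i). cmod (exp_sum tm_sign (9 ^ i * real b / 2 ^ (n + 2 * i)) (4 ^ i * Q)) ^ 2)
   \<le> (4 ^ i * (real Q + 2 ^ n)) ^ 2" (is "?energy \<le> _")
proof -
  have "coprime (9 ^ i) (2 ^ (n + 2 * i) :: nat)"
    by simp
  then have "?energy \<le> real (4 ^ i * Q) * (real (4 ^ i * Q) + real (2 ^ (n + 2 * i)))"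
    using sum_norm_exp_sum_sq_le[of "9 ^ i" "2 ^ (n + 2 * i)" tm_sign "4 ^ i * Q"] by simp
  also have "\<dots> = (4 ^ i) ^ 2 * (real Q * (real Q + 2 ^ n))"
  proof -
    have "real (2 ^ (n + 2 * i)) = 4 ^ i * 2 ^ n"
      by (simp add: power_add power_mult)
    then show ?thesis
      by (simp add: power2_eq_square algebra_simps)
  qed
  also have "\<dots> \<le> (4 ^ i * (real Q + 2 ^ n)) ^ 2"
    by (simp add: power2_eq_square power_mult_distrib mult_right_mono)
  finally show ?thesis .
qed

lemma tm_discrepancy_pow9_le: "\<bar>tm_discrepancy n k (9 ^ i * Q)\<bar> \<le> 8 ^ i * (real Q + 2 ^ n)"
proof -
  have pow: "(3::nat) ^ (2 * i) = 9 ^ i" "(3::real) ^ (2 * i) = 9 ^ i" "(2::nat) ^ (2 * i) = 4 ^ i"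
    by (simp_all add: power_mult)
  have "of_real (tm_discrepancy n k (9 ^ i * Q))
      = (\<Sum>b<2 ^ n. residue_coeff n k b * exp_sum tm_sign (real b / 2 ^ n) (3 ^ (2 * i) * Q))"
    unfolding tm_discrepancy_fourier pow ..
  also have "\<dots> = (\<Sum>b<2 ^ (n + 2 * i). refine_coeffs_iter n (2 * i) (residue_coeff n k) b
      * exp_sum tm_sign (9 ^ i * real b / 2 ^ (n + 2 * i)) (4 ^ i * Q))" (is "_ = ?S")
    unfolding exp_sum_refine_iter by (simp only: pow)
  finally have fourier: "of_real (tm_discrepancy n k (9 ^ i * Q)) = ?S" .
  have "\<bar>tm_discrepancy n k (9 ^ i * Q)\<bar> = cmod ?S"
    unfolding fourier[symmetric] by simp
  also have "\<dots> \<le> 2 ^ i * (4 ^ i * (real Q + 2 ^ n))"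
    by (rule norm_sum_mult_le[OF energy_residue_coeff_iter energy_exp_sum_tm_sign]) simp_all
  also have "\<dots> = 8 ^ i * (real Q + 2 ^ n)"
    by (simp add: mult.assoc flip: power_mult_distrib)
  finally show ?thesis .
qed

lemma tm_discrepancy_diff_le:
  assumes "M \<le> N"
  shows "\<bar>tm_discrepancy n k N - tm_discrepancy n k M\<bar> \<le> real (N - M)"
proof -
  have "tm_discrepancy n k N - tm_discrepancy n k M
      = (\<Sum>x\<in>{M..<N}. if [int x = k] (mod 2 ^ n) then tm_sign x else 0)"
    unfolding tm_discrepancy_def lessThan_atLeast0 by (intro sum_diff_nat_ivl) (simp_all add: assms)
  also have "\<bar>\<dots>\<bar> \<le> (\<Sum>x\<in>{M..<N}. 1)"
    by (rule order_trans[OF sum_abs sum_mono]) simp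
  finally show ?thesis by simp
qed

lemma tm_discrepancy_le: "\<bar>tm_discrepancy n k N\<bar> \<le> (8 / 9) ^ i * real N + 9 ^ i * (2 ^ n + 1)"
proof -
  define Q where "Q = N div 9 ^ i"
  have Q: "9 ^ i * Q \<le> N" "N - 9 ^ i * Q < 9 ^ i"
    unfolding Q_def by (simp_all add: minus_mod_eq_mult_div [symmetric])
  have "\<bar>tm_discrepancy n k N\<bar> \<le> \<bar>tm_discrepancy n k (9 ^ i * Q)\<bar> + real (N - 9 ^ i * Q)"
    using tm_discrepancy_diff_le[OF Q(1), of n k] by linarith
  also have "\<dots> \<le> 8 ^ i * (real Q + 2 ^ n) + 9 ^ i"
    using tm_discrepancy_pow9_le[of n k i Q] Q(2) by (simp add: add_mono less_imp_le)
  finally have "\<bar>tm_discrepancy n k N\<bar> \<le> 8 ^ i * real Q + 8 ^ i * 2 ^ n + 9 ^ i"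
    by (simp add: algebra_simps)
  moreover have "8 ^ i * real Q \<le> (8 / 9) ^ i * real N"
  proof -
    have "8 ^ i * real Q = (8 / 9) ^ i * real (9 ^ i * Q)"
      by (simp add: power_divide)
    also have "\<dots> \<le> (8 / 9) ^ i * real N"
      using Q(1) by (intro mult_left_mono of_nat_mono) simp_all
    finally show ?thesis .
  qed
  moreover have "(8::real) ^ i * 2 ^ n \<le> 9 ^ i * 2 ^ n"
    by (intro mult_right_mono power_mono) simp_all
  ultimately show ?thesis by (simp only: distrib_left mult_1_right)
qed

lemma LIMSEQ_ratio_if_sublinear_error:
  fixes g :: "nat \<Rightarrow> real"
  assumes "\<And>e. 0 < e \<Longrightarrow> \<exists>C. \<forall>N. \<bar>g N - a * real N\<bar> \<le> e * real N + C"
  shows "(\<lambda>N. g N / real N) \<longlonglongrightarrow> a"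
proof (rule LIMSEQ_I)
  fix r :: real
  assume r: "0 < r"
  then obtain C where C: "\<And>N. \<bar>g N - a * real N\<bar> \<le> r / 2 * real N + C"
    using assms[of "r / 2"] by auto
  obtain N0 :: nat where N0: "2 * \<bar>C\<bar> / r < real N0"
    using reals_Archimedean2 by blast
  have "\<bar>g N / real N - a\<bar> < r" if "N0 \<le> N" for N
  proof -
    have N: "2 * \<bar>C\<bar> / r < real N"
      using N0 that by linarith
    then have pos: "0 < real N"
      using r by (smt (verit) divide_nonneg_pos)
    have "C < r / 2 * real N"
      using N r by (simp add: field_simps)
    then have "\<bar>g N - a * real N\<bar> < r * real N"
      using C[of N] by linarith
    then show ?thesis
      using pos by (simp add: field_simps abs_divide flip: abs_of_pos)
  qed
  then show "\<exists>N0. \<forall>N\<ge>N0. norm (g N / real N - a) < r"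
    by auto
qed

lemma tm_discrepancy_density: "(\<lambda>N. tm_discrepancy n k N / real N) \<longlonglongrightarrow> 0"
proof (rule LIMSEQ_ratio_if_sublinear_error)
  fix e :: real
  assume "0 < e"
  then obtain i where i: "(8 / 9) ^ i < e"
    using real_arch_pow_inv[of e "8 / 9"] by auto
  have "\<bar>tm_discrepancy n k N - 0 * real N\<bar> \<le> e * real N + 9 ^ i * (2 ^ n + 1)" for N
  proof -
    have "(8 / 9) ^ i * real N \<le> e * real N"
      using i by (intro mult_right_mono) simp_all
    then show ?thesis
      using tm_discrepancy_le[of n k N i] by simp
  qed
  then show "\<exists>C. \<forall>N. \<bar>tm_discrepancy n k N - 0 * real N\<bar> \<le> e * real N + C"
    by blast
qed

lemma residue_class_density:
  assumes "0 < m"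
  shows "(\<lambda>N. real (card {x. x < N \<and> [int x = k] (mod int m)}) / real N) \<longlonglongrightarrow> 1 / real m"
proof (rule LIMSEQ_ratio_if_sublinear_error)
  fix e :: real
  assume "0 < e"
  define r where "r = nat (k mod int m)"
  have r: "r < m"
    using assms by (simp add: r_def nat_less_iff)
  have "\<bar>real (card {x. x < N \<and> [int x = k] (mod int m)}) - 1 / real m * real N\<bar> \<le> e * real N + 1"
    for N
  proof -
    have "[int x = k] (mod int m) \<longleftrightarrow> x mod m = r" for x
      using assms by (auto simp: r_def cong_def nat_eq_iff2 pos_mod_sign simp flip: zmod_int)
    then have set: "{x. x < N \<and> [int x = k] (mod int m)} = {x. x < N \<and> x mod m = r}"
      by simp
    have lower: "real (N div m) \<le> real N / real m"
      by (rule of_nat_div_le_of_nat)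
    have upper: "real N / real m < real (N div m) + 1"
      using dividend_less_div_times[OF assms, of N] assms
      by (simp add: field_simps flip: of_nat_Suc of_nat_mult of_nat_less_iff)
    have "real (N div m) \<le> real (card {x. x < N \<and> x mod m = r})"
      and "real (card {x. x < N \<and> x mod m = r}) \<le> real (N div m) + 1"
      using card_residue_class_bounds[OF r, of N] by simp_all
    moreover have "0 \<le> e * real N"
      using \<open>0 < e\<close> by simp
    ultimately show ?thesis
      using lower upper unfolding set by (simp add: abs_le_iff)
  qed
  then show "\<exists>C. \<forall>N. \<bar>real (card {x. x < N \<and> [int x = k] (mod int m)}) - 1 / real m * real N\<bar>
      \<le> e * real N + C"
    by blast
qed

lemma tm32_less_2: "tm32 n < 2"
  by (simp add: tm32_def)

lemma Ccount_eq:
  assumes "c \<in> {0, 1}"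
  shows "real (Ccount n c k N)
       = (real (card {x. x < N \<and> [int x = k] (mod 2 ^ n)}) + (-1) ^ c * tm_discrepancy n k N) / 2"
proof -
  have letter: "(if tm32 x = c then 1 else 0) = (1 + (-1) ^ c * tm_sign x) / 2" for x
    using assms tm32_less_2[of x] by (auto simp: tm_sign_def less_2_cases_iff)
  have "real (Ccount n c k N)
      = (\<Sum>x<N. if [int x = k] (mod 2 ^ n) then (1 + (-1) ^ c * tm_sign x) / 2 else 0)"
    unfolding Ccount_def card_filter_lessThan_eq_sum
    by (intro sum.cong refl) (auto simp flip: letter)
  also have "\<dots> = ((\<Sum>x<N. if [int x = k] (mod 2 ^ n) then 1 else 0)
      + (-1) ^ c * (\<Sum>x<N. if [int x = k] (mod 2 ^ n) then tm_sign x else 0)) / 2"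
  proof -
    have "(\<Sum>x<N. if [int x = k] (mod 2 ^ n) then (1 + (-1) ^ c * tm_sign x) / 2 else 0)
        = (\<Sum>x<N. ((if [int x = k] (mod 2 ^ n) then 1 else 0)
            + (-1) ^ c * (if [int x = k] (mod 2 ^ n) then tm_sign x else 0)) / 2)"
      by (intro sum.cong refl) simp
    then show ?thesis
      by (simp add: sum.distrib sum_distrib_left flip: sum_divide_distrib)
  qed
  finally show ?thesis
    unfolding card_filter_lessThan_eq_sum tm_discrepancy_def .
qed

theorem theorem18:
  shows "(\<forall>(n::nat) (c::nat) (k::int). c \<in> {0, 1} \<longrightarrow>
            (\<lambda>N. real (Ccount n c k N) / real N) \<longlonglongrightarrow> 1 / 2 ^ (n + 1))
       \<and> (\<forall>c::nat. c \<in> {0, 1} \<longrightarrow>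
            (\<lambda>N. real (card {i. i < N \<and> tm32 i = c}) / real N) \<longlonglongrightarrow> 1 / 2)"
proof -
  have density: "(\<lambda>N. real (Ccount n c k N) / real N) \<longlonglongrightarrow> 1 / 2 ^ (n + 1)"
    if "c \<in> {0, 1}" for n c k
  proof -
    have "(\<lambda>N. real (card {x. x < N \<and> [int x = k] (mod int (2 ^ n))}) / real N)
        \<longlonglongrightarrow> 1 / real (2 ^ n)"
      by (rule residue_class_density) simp
    then have "(\<lambda>N. (real (card {x. x < N \<and> [int x = k] (mod int (2 ^ n))}) / real N
              + (-1) ^ c * (tm_discrepancy n k N / real N)) / 2)
          \<longlonglongrightarrow> (1 / real (2 ^ n) + (-1) ^ c * 0) / 2"
      by (rule tendsto_divide
          [OF tendsto_add[OF _ tendsto_mult_left[OF tm_discrepancy_density]] tendsto_const])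
        simp
    then show ?thesis
      unfolding Ccount_eq[OF that] by (simp add: add_divide_distrib mult_ac)
  qed
  moreover have "Ccount 0 c 0 N = card {i. i < N \<and> tm32 i = c}" for c N
    by (simp add: Ccount_def)
  ultimately show ?thesis
    using density[of _ 0 0] by simp
qed

end
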